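(* Let $\mathcal G=(\mathcal V,\mathcal E,w)$ be a finite, undirected, connected graph with $n$ vertices and positive edge weights, and let $L$ be its Laplacian matrix. Let $w^*>0$ be a real number that is the weight of at least one $(m,k)$-star of $\mathcal G$. Let $\mathcal S_{w^*}$ be the set of all $(m,k)$-stars of $\mathcal G$ (as $m,k$ range over the positive integers with $m+k\le n$) whose weight is defined and equals $w^*$, and let $\deg(\mathcal S_{w^*})=\sum_{S_{m,k}\in\mathcal S_{w^*}}(m-1)$. Then $w^*$ is an eigenvalue of $L$ and its algebraic multiplicity as an eigenvalue of $L$ is at least $\deg(\mathcal S_{w^*})$.
   Context: Weighted adjacency matrix: $A_{ij}=w(i,j)$ if $\{i,j\}\in\mathcal E$ and $A_{ij}=0$ otherwise (no loops). The strength of a vertex $i$ is $s(i)=\sum_j A_{ij}$. The Laplacian is $L=D-A$ with $D=\mathrm{diag}(s(1),\dots,s(n))$. An $(m,k)$-star of $\mathcal G$, denoted $S_{m,k}$, is a pair $(\mathcal V_1,\mathcal V_2)$ of disjoint vertex sets with $|\mathcal V_1|=m\ge 2$, $|\mathcal V_2|=k$, such that every vertex of $\mathcal V_1$ is adjacent to every vertex of $\mathcal V_2$ and to no vertex outside $\mathcal V_2$ (so $\mathcal V_1$ is independent); the sets are uniquely determined, i.e. $\mathcal V_1$ is the set of all vertices of $\mathcal G$ whose neighbourhood is exactly $\mathcal V_2$ (so distinct $(m,k)$-stars have disjoint sets $\mathcal V_1$). Its degree is $m-1$. Its weight is defined only when $w(i,j)=w(i',j)$ for all $i,i'\in\mathcal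 V_1$ and all $j\in\mathcal V_2$, and then equals $\sum_{j\in\mathcal V_2}w(i,j)$ for any $i\in\mathcal V_1$. *)

theory Defs
  imports "Jordan_Normal_Form.Char_Poly"
begin

text \<open>Vertices are 0..<n. E is the (symmetric, irreflexive) edge relation, w the weight
  function (only its values on edges matter).\<close>

definition adj_mat :: "nat \<Rightarrow> (nat \<Rightarrow> nat \<Rightarrow> bool) \<Rightarrow> (nat \<Rightarrow> nat \<Rightarrow> real) \<Rightarrow> nat \<Rightarrow> nat \<Rightarrow> real" where
  "adj_mat n E w i j = (if E i j then w i j else 0)"

definition strength :: "nat \<Rightarrow> (nat \<Rightarrow> nat \<Rightarrow> bool) \<Rightarrow> (nat \<Rightarrow> nat \<Rightarrow> real) \<Rightarrow> nat \<Rightarrow> real" where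
  "strength n E w i = (\<Sum>j<n. adj_mat n E w i j)"

definition laplacian :: "nat \<Rightarrow> (nat \<Rightarrow> nat \<Rightarrow> bool) \<Rightarrow> (nat \<Rightarrow> nat \<Rightarrow> real) \<Rightarrow> real mat" where
  "laplacian n E w = mat n n (\<lambda>(i,j). (if i = j then strength n E w i else 0) - adj_mat n E w i j)"

definition nbhd :: "nat \<Rightarrow> (nat \<Rightarrow> nat \<Rightarrow> bool) \<Rightarrow> nat \<Rightarrow> nat set" where
  "nbhd n E i = {j. j < n \<and> E i j}"

text \<open>(V1,V2) is an (m,k)-star with m = card V1, k = card V2 (m \<ge> 2, k \<ge> 1).\<close>
definition is_star :: "nat \<Rightarrow> (nat \<Rightarrow> nat \<Rightarrow> bool) \<Rightarrow> nat set \<Rightarrow> nat set \<Rightarrow> bool" where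
  "is_star n E V1 V2 \<longleftrightarrow>
     V1 \<subseteq> {..<n} \<and> V2 \<subseteq> {..<n} \<and> V1 \<inter> V2 = {} \<and>
     card V1 \<ge> 2 \<and> card V2 \<ge> 1 \<and>
     (\<forall>i\<in>V1. \<forall>j\<in>V2. E i j) \<and>
     (\<forall>i\<in>V1. \<forall>j<n. E i j \<longrightarrow> j \<in> V2) \<and>
     V1 = {i. i < n \<and> nbhd n E i = V2}"

definition star_weight_defined :: "(nat \<Rightarrow> nat \<Rightarrow> real) \<Rightarrow> nat set \<Rightarrow> nat set \<Rightarrow> bool" where
  "star_weight_defined w V1 V2 \<longleftrightarrow> (\<forall>i\<in>V1. \<forall>i'\<in>V1. \<forall>j\<in>V2. w i j = w i' j)"

definition star_weight :: "(nat \<Rightarrow> nat \<Rightarrow> real) \<Rightarrow> nat set \<Rightarrow> nat set \<Rightarrow> real" where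
  "star_weight w V1 V2 = (\<Sum>j\<in>V2. w (SOME i. i \<in> V1) j)"

definition stars_of_weight :: "nat \<Rightarrow> (nat \<Rightarrow> nat \<Rightarrow> bool) \<Rightarrow> (nat \<Rightarrow> nat \<Rightarrow> real) \<Rightarrow> real \<Rightarrow> (nat set \<times> nat set) set" where
  "stars_of_weight n E w c = {(V1, V2). is_star n E V1 V2 \<and> star_weight_defined w V1 V2 \<and> star_weight w V1 V2 = c}"

definition stars_degree :: "nat \<Rightarrow> (nat \<Rightarrow> nat \<Rightarrow> bool) \<Rightarrow> (nat \<Rightarrow> nat \<Rightarrow> real) \<Rightarrow> real \<Rightarrow> nat" where
  "stars_degree n E w c = (\<Sum>(V1, V2)\<in>stars_of_weight n E w c. card V1 - 1)"

end

theory Submission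
  imports Defs
begin

text \<open>Two vertices of the same star are twins: their columns of the Laplacian agree except
  on the diagonal, where both carry the star weight \<open>c\<close>. Hence for twins \<open>k\<close> and \<open>p\<close> the
  vector \<open>e\<^sub>k - e\<^sub>p\<close> is an eigenvector for \<open>c\<close>. On the level of the characteristic
  polynomial, subtracting in \<open>x I - L\<close> the column of the smallest vertex of each star from the
  columns of its other vertices is a unitriangular column operation, after which each of these
  \<open>m - 1\<close> columns per star is divisible by \<open>x - c\<close>.\<close>

lemma det_upper_triangular_mat:
  assumes "\<And>i j. j < i \<Longrightarrow> i < n \<Longrightarrow> f (i, j) = 0"
  shows "det (mat n n f) = (\<Prod>i<n. f (i, i))"
proof -
  have "upper_triangular (mat n n f)"
    unfolding upper_triangular_def using assms by auto
  then have "det (mat n n f) = prod_list (diag_mat (mat n n f))"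
    by (rule det_upper_triangular) auto
  also have "diag_mat (mat n n f) = map (\<lambda>i. f (i, i)) [0..<n]"
    unfolding diag_mat_def by auto
  finally show ?thesis
    by (simp add: prod.distinct_set_conv_list[symmetric] lessThan_atLeast0)
qed

lemma power_dvd_det_of_column_differences:
  fixes M :: "'a :: comm_ring_1 mat"
  assumes M: "M \<in> carrier_mat n n" and D: "D \<subseteq> {..<n}"
    and piv: "\<And>k. k \<in> D \<Longrightarrow> piv k < k"
    and diff: "\<And>k i. k \<in> D \<Longrightarrow> i < n \<Longrightarrow> M $$ (i, k) - M $$ (i, piv k) = q * v k i"
  shows "q ^ card D dvd det M"
proof -
  define P :: "'a mat" where
    "P = mat n n (\<lambda>(i, j). (if i = j then 1 else 0) - (if j \<in> D \<and> i = piv j then 1 else 0))"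
  define M' :: "'a mat" where
    "M' = mat n n (\<lambda>(i, j). if j \<in> D then v j i else M $$ (i, j))"
  define Q :: "'a mat" where
    "Q = mat n n (\<lambda>(i, j). if i = j then (if i \<in> D then q else 1) else 0)"
  have carrier: "P \<in> carrier_mat n n" "M' \<in> carrier_mat n n" "Q \<in> carrier_mat n n"
    unfolding P_def M'_def Q_def by auto
  have "det P = (\<Prod>i<n. 1)"
    unfolding P_def by (subst det_upper_triangular_mat) (use piv in \<open>fastforce intro: prod.cong\<close>)+
  then have det_P: "det P = 1" by simp
  have "det Q = (\<Prod>i<n. if i \<in> D then q else 1)"
    unfolding Q_def by (subst det_upper_triangular_mat) auto
  also have "\<dots> = q ^ card D"
    using D by (simp add: prod.If_cases Int_absorb1)
  finally have det_Q: "det Q = q ^ card D" .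
  have "M * P = M' * Q"
  proof (rule eq_matI)
    fix i j assume "i < dim_row (M' * Q)" "j < dim_col (M' * Q)"
    then have i: "i < n" and j: "j < n" using carrier by auto
    have "(M * P) $$ (i, j) = (\<Sum>k<n. M $$ (i, k) * P $$ (k, j))"
      using i j M carrier by (simp add: scalar_prod_def lessThan_atLeast0)
    also have "\<dots> = (\<Sum>k<n. (if k = j then M $$ (i, j) else 0)
                          - (if j \<in> D \<and> k = piv j then M $$ (i, piv j) else 0))"
      using j by (intro sum.cong) (auto simp: P_def)
    also have "\<dots> = M $$ (i, j) - (if j \<in> D then M $$ (i, piv j) else 0)"
      using j piv[of j] by (auto simp: sum_subtractf)
    also have "\<dots> = (if j \<in> D then v j i * q else M $$ (i, j))"
      using diff[OF _ i, of j] by (simp add: mult.commute)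
    also have "\<dots> = (\<Sum>k<n. if k = j then M' $$ (i, k) * Q $$ (k, j) else 0)"
      using i j by (simp add: M'_def Q_def)
    also have "\<dots> = (\<Sum>k<n. M' $$ (i, k) * Q $$ (k, j))"
      using j by (intro sum.cong) (auto simp: Q_def)
    also have "\<dots> = (M' * Q) $$ (i, j)"
      using i j carrier by (simp add: scalar_prod_def lessThan_atLeast0)
    finally show "(M * P) $$ (i, j) = (M' * Q) $$ (i, j)" .
  qed (use M carrier in auto)
  then have "det M = det M' * q ^ card D"
    using det_mult[OF M carrier(1)] det_mult[OF carrier(2,3)] det_P det_Q by simp
  then show ?thesis by simp
qed

lemma linear_power_dvd_char_poly_of_column_differences:
  fixes A :: "'a :: comm_ring_1 mat"
  assumes A: "A \<in> carrier_mat n n" and D: "D \<subseteq> {..<n}"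
    and piv: "\<And>k. k \<in> D \<Longrightarrow> piv k < k"
    and diff: "\<And>k i. k \<in> D \<Longrightarrow> i < n \<Longrightarrow>
      A $$ (i, k) - A $$ (i, piv k) = c * ((if i = k then 1 else 0) - (if i = piv k then 1 else 0))"
  shows "[:-c, 1:] ^ card D dvd char_poly A"
  unfolding char_poly_def
proof (rule power_dvd_det_of_column_differences[OF _ D piv])
  show "char_poly_matrix A \<in> carrier_mat n n" using A by simp
  fix k i assume k: "k \<in> D" and i: "i < n"
  have "k < n" "piv k < n" using k D piv[OF k] by auto
  then show "char_poly_matrix A $$ (i, k) - char_poly_matrix A $$ (i, piv k)
    = [:-c, 1:] * [:(if i = k then 1 else 0) - (if i = piv k then 1 else 0):]"
    using diff[OF k i] A i piv[OF k]
    by (cases "i = k"; cases "i = piv k") (auto simp: char_poly_matrix_def algebra_simps one_pCons)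
qed

lemma order_char_poly_ge_of_power_dvd:
  fixes A :: "'a :: field mat"
  assumes A: "A \<in> carrier_mat n n" and dvd: "[:-c, 1:] ^ m dvd char_poly A"
  shows "m \<le> order c (char_poly A)" and "0 < m \<Longrightarrow> eigenvalue A c"
proof -
  have "char_poly A \<noteq> 0" using degree_monic_char_poly[OF A] by auto
  then show ord: "m \<le> order c (char_poly A)" using dvd order_divides by blast
  assume "0 < m"
  then have "poly (char_poly A) c = 0" using ord order_root[of "char_poly A" c] by linarith
  then show "eigenvalue A c" using eigenvalue_root_char_poly[OF A] by simp
qed

lemma is_star_twins_eq: "is_star n E V1 V2 \<Longrightarrow> V1 = {i. i < n \<and> nbhd n E i = V2}"
  unfolding is_star_def by (elim conjE)

lemma is_star_card_ge_2: "is_star n E V1 V2 \<Longrightarrow> 2 \<le> card V1"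
  unfolding is_star_def by (elim conjE)

lemma is_star_subset: "is_star n E V1 V2 \<Longrightarrow> V1 \<subseteq> {..<n} \<and> V2 \<subseteq> {..<n}"
  unfolding is_star_def by (elim conjE) simp

lemma is_star_nbhd:
  assumes "is_star n E V1 V2" and "k \<in> V1" and "j < n"
  shows "E k j \<longleftrightarrow> j \<in> V2"
proof -
  have "(\<forall>i \<in> V1. \<forall>j \<in> V2. E i j) \<and> (\<forall>i \<in> V1. \<forall>j < n. E i j \<longrightarrow> j \<in> V2)"
    using assms(1) unfolding is_star_def by (elim conjE) (intro conjI; assumption)
  then show ?thesis using assms(2,3) by blast
qed

lemma is_star_twin_class:
  assumes "is_star n E V1 V2" and "k \<in> V1"
  shows "{i. i < n \<and> nbhd n E i = nbhd n E k} = V1"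
  using is_star_twins_eq[OF assms(1)] assms(2) by auto

lemma is_star_disjoint:
  assumes "is_star n E V1 V2" and "is_star n E U1 U2" and "(V1, V2) \<noteq> (U1, U2)"
  shows "V1 \<inter> U1 = {}"
  using is_star_twins_eq[OF assms(1)] is_star_twins_eq[OF assms(2)] assms(3) by auto

lemma finite_stars_of_weight: "finite (stars_of_weight n E w c)"
proof (rule finite_subset)
  show "stars_of_weight n E w c \<subseteq> Pow {..<n} \<times> Pow {..<n}"
    unfolding stars_of_weight_def is_star_def by auto
qed auto

lemma card_UN_stars_of_weight_Diff_Min:
  "card (\<Union>(V1, V2) \<in> stars_of_weight n E w c. V1 - {Min V1}) = stars_degree n E w c"
proof -
  let ?S = "stars_of_weight n E w c"
  have star: "is_star n E V1 V2" if "(V1, V2) \<in> ?S" for V1 V2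
    using that unfolding stars_of_weight_def by simp
  have twins: "finite V1" "V1 \<noteq> {}" if "(V1, V2) \<in> ?S" for V1 V2
    using is_star_card_ge_2[OF star[OF that]] by (auto intro: card_ge_0_finite)
  have "card (\<Union>(V1, V2) \<in> ?S. V1 - {Min V1})
      = (\<Sum>x \<in> ?S. card (case x of (V1, V2) \<Rightarrow> V1 - {Min V1}))"
  proof (rule card_UN_disjoint[OF finite_stars_of_weight])
    show "\<forall>x \<in> ?S. finite (case x of (V1, V2) \<Rightarrow> V1 - {Min V1})"
      by (auto dest: twins)
    show "\<forall>x \<in> ?S. \<forall>y \<in> ?S. x \<noteq> y \<longrightarrow>
      (case x of (V1, V2) \<Rightarrow> V1 - {Min V1}) \<inter> (case y of (V1, V2) \<Rightarrow> V1 - {Min V1}) = {}"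
      using is_star_disjoint star by (clarsimp simp: split_beta) blast
  qed
  also have "\<dots> = (\<Sum>(V1, V2) \<in> ?S. card V1 - 1)"
  proof (rule sum.cong[OF refl])
    fix x assume "x \<in> ?S"
    then show "card (case x of (V1, V2) \<Rightarrow> V1 - {Min V1}) = (case x of (V1, V2) \<Rightarrow> card V1 - 1)"
      by (cases x) (simp add: twins Min_in)
  qed
  finally show ?thesis unfolding stars_degree_def .
qed

lemma strength_star_vertex:
  assumes star: "is_star n E V1 V2" and weight: "star_weight_defined w V1 V2" and k: "k \<in> V1"
  shows "strength n E w k = star_weight w V1 V2"
proof -
  have V2: "V2 \<subseteq> {..<n}" using is_star_subset[OF star] by simp
  have "strength n E w k = (\<Sum>j \<in> V2. adj_mat n E w k j)"
    unfolding strength_def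
  proof (rule sum.mono_neutral_right)
    show "\<forall>j \<in> {..<n} - V2. adj_mat n E w k j = 0"
      using is_star_nbhd[OF star k] by (simp add: adj_mat_def)
  qed (use V2 in auto)
  also have "\<dots> = (\<Sum>j \<in> V2. w (SOME i. i \<in> V1) j)"
  proof (rule sum.cong[OF refl])
    fix j assume j: "j \<in> V2"
    have "E k j" using is_star_nbhd[OF star k] j V2 by blast
    then have "adj_mat n E w k j = w k j" unfolding adj_mat_def by simp
    also have "\<dots> = w (SOME i. i \<in> V1) j"
      using weight k j someI[of "\<lambda>i. i \<in> V1", OF k] unfolding star_weight_defined_def by blast
    finally show "adj_mat n E w k j = w (SOME i. i \<in> V1) j" .
  qed
  finally show ?thesis unfolding star_weight_def .
qed

lemma adj_mat_star_twins:
  assumes verts: "\<And>i j. E i j \<Longrightarrow> i < n \<and> j < n"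
    and sym: "\<And>i j. E i j \<Longrightarrow> E j i"
    and wsym: "\<And>i j. E i j \<Longrightarrow> w i j = w j i"
    and star: "is_star n E V1 V2" and weight: "star_weight_defined w V1 V2"
    and k: "k \<in> V1" and p: "p \<in> V1"
  shows "adj_mat n E w r k = adj_mat n E w r p"
proof -
  have nbhd: "E r v \<longleftrightarrow> r < n \<and> r \<in> V2" if "v \<in> V1" for v
    using is_star_nbhd[OF star that, of r] sym verts by blast
  show ?thesis
  proof (cases "r < n \<and> r \<in> V2")
    case True
    then have "E r k" "E r p" using nbhd k p by auto
    then have "w r k = w k r" "w p r = w r p" using wsym sym by auto
    moreover have "w k r = w p r"
      using weight k p True unfolding star_weight_defined_def by blast
    ultimately show ?thesis using \<open>E r k\<close> \<open>E r p\<close> unfolding adj_mat_def by simp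
  next
    case False
    then have "\<not> E r k" "\<not> E r p" using nbhd k p by auto
    then show ?thesis unfolding adj_mat_def by simp
  qed
qed

lemma laplacian_star_column_difference:
  assumes verts: "\<And>i j. E i j \<Longrightarrow> i < n \<and> j < n"
    and sym: "\<And>i j. E i j \<Longrightarrow> E j i"
    and wsym: "\<And>i j. E i j \<Longrightarrow> w i j = w j i"
    and star: "is_star n E V1 V2" and weight: "star_weight_defined w V1 V2"
    and k: "k \<in> V1" and p: "p \<in> V1" and r: "r < n"
  shows "laplacian n E w $$ (r, k) - laplacian n E w $$ (r, p)
    = star_weight w V1 V2 * ((if r = k then 1 else 0) - (if r = p then 1 else 0))"
proof -
  have "k < n" "p < n" using is_star_subset[OF star] k p by auto
  then show ?thesis
    using r adj_mat_star_twins[OF verts sym wsym star weight k p, of r]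
      strength_star_vertex[OF star weight k] strength_star_vertex[OF star weight p]
    by (simp add: laplacian_def)
qed

lemma stars_degree_pos:
  assumes "is_star n E V1 V2" and "star_weight_defined w V1 V2" and "star_weight w V1 V2 = c"
  shows "0 < stars_degree n E w c"
  unfolding stars_degree_def
proof (rule sum_pos2[OF finite_stars_of_weight])
  show "(V1, V2) \<in> stars_of_weight n E w c" using assms unfolding stars_of_weight_def by simp
  show "0 < (case (V1, V2) of (V1, V2) \<Rightarrow> card V1 - 1)" using is_star_card_ge_2[OF assms(1)] by simp
qed auto

lemma power_stars_degree_dvd_char_poly_laplacian:
  assumes verts: "\<And>i j. E i j \<Longrightarrow> i < n \<and> j < n"
    and sym: "\<And>i j. E i j \<Longrightarrow> E j i"
    and wsym: "\<And>i j. E i j \<Longrightarrow> w i j = w j i"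
  shows "[:-c, 1:] ^ stars_degree n E w c dvd char_poly (laplacian n E w)"
proof -
  let ?L = "laplacian n E w" and ?S = "stars_of_weight n E w c"
  define D where "D = (\<Union>(V1, V2) \<in> ?S. V1 - {Min V1})"
  define piv where "piv k = Min {i. i < n \<and> nbhd n E i = nbhd n E k}" for k
  have star: "is_star n E V1 V2" "star_weight_defined w V1 V2" "star_weight w V1 V2 = c"
    if "(V1, V2) \<in> ?S" for V1 V2
    using that unfolding stars_of_weight_def by auto
  have twins: "finite V1" "V1 \<subseteq> {..<n}" if "(V1, V2) \<in> ?S" for V1 V2
    using is_star_card_ge_2[OF star(1)[OF that]] is_star_subset[OF star(1)[OF that]]
    by (auto intro: card_ge_0_finite)
  have "[:-c, 1:] ^ card D dvd char_poly ?L"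
  proof (rule linear_power_dvd_char_poly_of_column_differences)
    show "?L \<in> carrier_mat n n" unfolding laplacian_def by simp
    show "D \<subseteq> {..<n}" unfolding D_def using twins(2) by fastforce
    fix k assume "k \<in> D"
    then obtain V1 V2 where S: "(V1, V2) \<in> ?S" and k: "k \<in> V1" "k \<noteq> Min V1"
      unfolding D_def by auto
    have piv_k: "piv k = Min V1"
      unfolding piv_def is_star_twin_class[OF star(1)[OF S] k(1)] ..
    have min: "Min V1 \<in> V1" "Min V1 \<le> k" using twins(1)[OF S] k(1) by (auto intro: Min_in)
    show "piv k < k" using piv_k min k(2) by simp
    show "r < n \<Longrightarrow> ?L $$ (r, k) - ?L $$ (r, piv k)
      = c * ((if r = k then 1 else 0) - (if r = piv k then 1 else 0))" for r
      using laplacian_star_column_difference[OF verts sym wsym star(1,2)[OF S] k(1) min(1)]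
        star(3)[OF S] piv_k by simp
  qed
  then show ?thesis unfolding D_def card_UN_stars_of_weight_Diff_Min .
qed

theorem theorem1:
  fixes n :: nat and E :: "nat \<Rightarrow> nat \<Rightarrow> bool" and w :: "nat \<Rightarrow> nat \<Rightarrow> real" and c :: real
  assumes verts: "\<And>i j. E i j \<Longrightarrow> i < n \<and> j < n"
    and sym: "\<And>i j. E i j \<Longrightarrow> E j i"
    and irrefl: "\<And>i. \<not> E i i"
    and wsym: "\<And>i j. E i j \<Longrightarrow> w i j = w j i"
    and wpos: "\<And>i j. E i j \<Longrightarrow> w i j > 0"
    and conn: "\<And>i j. i < n \<Longrightarrow> j < n \<Longrightarrow> E\<^sup>*\<^sup>* i j"
    and cpos: "c > 0"
    and ex_star: "\<exists>V1 V2. is_star n E V1 V2 \<and> star_weight_defined w V1 V2 \<and> star_weight w V1 V2 = c"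
  shows "eigenvalue (laplacian n E w) c \<and>
         order c (char_poly (laplacian n E w)) \<ge> stars_degree n E w c"
proof -
  have L: "laplacian n E w \<in> carrier_mat n n" unfolding laplacian_def by simp
  note order = order_char_poly_ge_of_power_dvd[OF L
      power_stars_degree_dvd_char_poly_laplacian[OF verts sym wsym]]
  from ex_star have "0 < stars_degree n E w c" by (auto intro: stars_degree_pos)
  then show ?thesis using order by simp
qed

end
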